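(* Consider the corrupted Lipschitz contextual search problem with pricing loss described in the context, and assume the corruption budget $C\ge 1$ is known to the learner. If the learner runs Algorithm 3 (described in the context) with $\eta_0=T^{-1/(d+1)}$ and $\tau_0=\sqrt{T/C}$, then for every $L$-Lipschitz $f$, context sequence and adaptive corruption strategy with at most $C$ corrupted rounds, the total pricing loss is at most \[ L\cdot\widetilde{O}\big(T^{d/(d+1)}+\sqrt{TC}\big), \] where $\widetilde O$ hides logarithmic factors in $T$.
   Context: Problem. Fix $L>0$, $d\ge 1$, horizon $T\ge 2$. An adversary fixes an unknown $f:[0,1]^d\to[0,L]$ with $|f(x)-f(y)|\le L\|x-y\|_\infty$. In each round $t=1,\dots,T$: the adversary chooses $x_t\in[0,1]^d$; the learner observes $x_t$ and posts a guess $q_t$; the adversary observes $q_t$ and sends $\sigma_t\in\{0,1\}$. With $\sigma(u)=1$ if $u>0$, $0$ if $u\le 0$: in uncorrupted rounds $\sigma_t=\sigma(q_t-f(x_t))$, in corrupted rounds $\sigma_t=1-\sigma(q_t-f(x_t))$; the adversary chooses adaptively (after seeing $q_t$) which rounds to corrupt, with at most $C$ corrupted rounds. The pricing loss of round $t$ is $f(x_t)-q_t\cdot\mathbb{1}[q_t\le f(x_t)]$. $\mathtt{len}$ denotes length of an interval and side length of a hypercube. Subroutine $\mathtt{MidpointQuery}(I,Y)$, $Y=[a,b]$: guess $q=(a+b)/2$; if $\sigma_t=1$ return $Y\cap[0,q+L\,\mathtt{len}(I)]$, if $\sigma_t=0$ return $Y\cap[q-L\,\mathtt{len}(I),\infty)$.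 Algorithm 3 (parameters $\eta_0$, $\tau_0$). Uniformly partition $[0,1]^d$ into hypercubes of side length $\Theta(\eta_0)$; each hypercube $I_j$ has range $Y_j$ (initially $[0,L]$) and counter $c_j$ (initially $0$). In round $t$, with $I_j\ni x_t$: if $\mathtt{len}(Y_j)<10L\eta_0$, set $c_j:=c_j+1$; if $c_j>\tau_0$ guess $\max(Y_j)$ (checking round) and set $c_j:=0$, else guess $\min(Y_j)$ (pricing round); if a checking round receives $\sigma_t=0$ or a pricing round receives $\sigma_t=1$ (the learner is "surprised"), set $Y_j:=[0,L]$, $c_j:=0$. Otherwise (searching round) set $Y_j:=\mathtt{MidpointQuery}(I_j,Y_j)$. *)

theory Defs
  imports Complex_Main
begin

(* Contexts are points of [0,1]^d, represented as functions nat => real that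
   lie in [0,1] on coordinates < d and vanish on coordinates >= d. *)
definition cube :: "nat \<Rightarrow> (nat \<Rightarrow> real) set" where
  "cube d = {x. (\<forall>i<d. 0 \<le> x i \<and> x i \<le> 1) \<and> (\<forall>i\<ge>d. x i = 0)}"

definition sup_dist :: "nat \<Rightarrow> (nat \<Rightarrow> real) \<Rightarrow> (nat \<Rightarrow> real) \<Rightarrow> real" where
  "sup_dist d x y = Max ((\<lambda>i. \<bar>x i - y i\<bar>) ` {..<d})"

definition lip_target :: "nat \<Rightarrow> real \<Rightarrow> ((nat \<Rightarrow> real) \<Rightarrow> real) \<Rightarrow> bool" where
  "lip_target d L f \<longleftrightarrow>
     (\<forall>x\<in>cube d. 0 \<le> f x \<and> f x \<le> L) \<and>
     (\<forall>x\<in>cube d. \<forall>y\<in>cube d. \<bar>f x - f y\<bar> \<le> L * sup_dist d x y)"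

definition pricing_loss :: "real \<Rightarrow> real \<Rightarrow> real" where
  "pricing_loss v q = v - (if q \<le> v then q else 0)"

(* uniform partition: m = ceil(1/eta) cells per axis, side length 1/m in (eta/2, eta] *)
definition ncells :: "real \<Rightarrow> nat" where
  "ncells \<eta> = nat \<lceil>1 / \<eta>\<rceil>"

definition cell_of :: "nat \<Rightarrow> nat \<Rightarrow> (nat \<Rightarrow> real) \<Rightarrow> nat list" where
  "cell_of d m x = map (\<lambda>i. min (nat \<lfloor>x i * real m\<rfloor>) (m - 1)) [0..<d]"

(* per-cell state: range Y_j = [a,b] and counter c_j *)
type_synonym cellst = "real \<times> real \<times> nat"
type_synonym lstate = "nat list \<Rightarrow> cellst"
(* history entries: context x_t, guess q_t, feedback sigma_t, corrupted-flag *)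
type_synonym hist = "((nat \<Rightarrow> real) \<times> real \<times> bool \<times> bool) list"

definition alg3_guess :: "nat \<Rightarrow> real \<Rightarrow> real \<Rightarrow> real \<Rightarrow> lstate \<Rightarrow> (nat \<Rightarrow> real) \<Rightarrow> real" where
  "alg3_guess d L \<eta> \<tau> S x =
     (case S (cell_of d (ncells \<eta>) x) of (a, b, c) \<Rightarrow>
        if b - a < 10 * L * \<eta> then (if real (c + 1) > \<tau> then b else a)
        else (a + b) / 2)"

definition alg3_update :: "nat \<Rightarrow> real \<Rightarrow> real \<Rightarrow> real \<Rightarrow> lstate \<Rightarrow> (nat \<Rightarrow> real) \<Rightarrow> bool \<Rightarrow> lstate" where
  "alg3_update d L \<eta> \<tau> S x \<sigma> =
     (let j = cell_of d (ncells \<eta>) x; len = 1 / real (ncells \<eta>) in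
      case S j of (a, b, c) \<Rightarrow>
        if b - a < 10 * L * \<eta> then
          (if real (c + 1) > \<tau> then
             (if \<sigma> then S(j := (a, b, 0)) else S(j := (0, L, 0)))
           else
             (if \<sigma> then S(j := (0, L, 0)) else S(j := (a, b, c + 1))))
        else
          (let q = (a + b) / 2 in
           if \<sigma> then S(j := (max a 0, min b (q + L * len), c))
           else S(j := (max a (q - L * len), b, c))))"

(* Interaction of Algorithm 3 with an adaptive adversary (advx picks the context
   from the history, advc decides corruption after seeing context and guess). *)
fun alg3_run :: "nat \<Rightarrow> real \<Rightarrow> real \<Rightarrow> real \<Rightarrow> ((nat \<Rightarrow> real) \<Rightarrow> real) \<Rightarrow>
    (hist \<Rightarrow> (nat \<Rightarrow> real)) \<Rightarrow> (hist \<Rightarrow> (nat \<Rightarrow> real) \<Rightarrow> real \<Rightarrow> bool) \<Rightarrow> nat \<Rightarrow> lstate \<times> hist" where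
  "alg3_run d L \<eta> \<tau> f advx advc 0 = ((\<lambda>_. (0, L, 0)), [])"
| "alg3_run d L \<eta> \<tau> f advx advc (Suc t) =
     (case alg3_run d L \<eta> \<tau> f advx advc t of (S, h) \<Rightarrow>
        let x = advx h;
            q = alg3_guess d L \<eta> \<tau> S x;
            cr = advc h x q;
            \<sigma> = (if cr then \<not> (q > f x) else q > f x)
        in (alg3_update d L \<eta> \<tau> S x \<sigma>, h @ [(x, q, \<sigma>, cr)]))"

definition run_hist where
  "run_hist d L \<eta> \<tau> f advx advc T = snd (alg3_run d L \<eta> \<tau> f advx advc T)"

definition num_corrupted :: "hist \<Rightarrow> nat" where
  "num_corrupted h = length (filter (\<lambda>(x, q, \<sigma>, cr). cr) h)"

definition total_loss :: "((nat \<Rightarrow> real) \<Rightarrow> real) \<Rightarrow> hist \<Rightarrow> real" where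
  "total_loss f h = sum_list (map (\<lambda>(x, q, \<sigma>, cr). pricing_loss (f x) q) h)"

end

theory Submission
  imports Defs
begin

text \<open>A round costs
  at most \<open>L\<close>, and at most \<open>11 L \<eta>\<close> unless it is corrupted, searching, checking, a
  surprised pricing round, or an uncorrupted pricing round with \<open>f x > a + 11 L \<eta>\<close>. Each
  kind of expensive round is paid for by a potential stored in the cells. The counters bound
  the checking rounds by \<open>T / \<tau>\<close>. A logarithmic potential of the width bounds the searching
  rounds by \<open>O(log (1 / \<eta>))\<close> per cell and per reset. Uncorrupted feedback never pushes
  \<open>f\<close> out of \<open>[a, b + L len(I\<^sub>j)]\<close> on the cell, so a violation of the lower end is created
  only by corruption and destroyed by each surprise, while a violation of the upper end,
  weighted by \<open>\<tau> - c\<close>, loses one unit per undercharged round. Altogether the loss is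
  \<open>O(L (\<eta> T + log (1 / \<eta>) (\<eta> powr -d + T / \<tau> + C) + \<tau> C))\<close>, and
  \<open>\<eta> = T powr (-1 / (d + 1))\<close>, \<open>\<tau> = sqrt (T / C)\<close> balance the terms.\<close>

lemma ncells_pos:
  assumes "0 < \<eta>"
  shows "1 \<le> ncells \<eta>"
proof -
  have "0 < \<lceil>1 / \<eta>\<rceil>"
    using assms by simp
  then show ?thesis
    unfolding ncells_def by linarith
qed

lemma inverse_le_ncells:
  assumes "0 < \<eta>"
  shows "1 / \<eta> \<le> real (ncells \<eta>)"
proof -
  have "0 < 1 / \<eta>"
    using assms by simp
  then have "0 \<le> \<lceil>1 / \<eta>\<rceil>"
    unfolding zero_le_ceiling by linarith
  then show ?thesis
    unfolding ncells_def by (simp add: le_of_int_ceiling)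
qed

lemma ncells_le_twice_inverse:
  assumes "0 < \<eta>" "\<eta> \<le> 1"
  shows "real (ncells \<eta>) \<le> 2 / \<eta>"
proof -
  have "1 \<le> 1 / \<eta>"
    using assms by simp
  then have "real (ncells \<eta>) \<le> 1 / \<eta> + 1"
    unfolding ncells_def using of_int_ceiling_le_add_one[of "1 / \<eta>"] by simp
  also have "\<dots> \<le> 2 / \<eta>"
    using \<open>1 \<le> 1 / \<eta>\<close> by simp
  finally show ?thesis .
qed

lemma cell_side_le:
  assumes "0 < \<eta>"
  shows "1 / real (ncells \<eta>) \<le> \<eta>"
  using inverse_le_ncells[OF assms] ncells_pos[OF assms] assms by (simp add: field_simps)

lemma cell_index_bounds:
  fixes m :: nat and z :: real
  assumes "1 \<le> m" "0 \<le> z" "z \<le> 1"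
  defines "k \<equiv> min (nat \<lfloor>z * real m\<rfloor>) (m - 1)"
  shows "real k \<le> z * real m" and "z * real m \<le> real k + 1"
proof -
  have zm: "0 \<le> z * real m" "z * real m \<le> real m"
    using assms by (auto simp: mult_le_cancel_right1)
  have "real k \<le> z * real m \<and> z * real m \<le> real k + 1"
  proof (cases "nat \<lfloor>z * real m\<rfloor> \<le> m - 1")
    case True
    then show ?thesis
      using zm by (simp add: k_def min_def)
  next
    case False
    then have "real m \<le> z * real m"
      by linarith
    then show ?thesis
      using False zm assms(1) by (simp add: k_def min_def of_nat_diff)
  qed
  then show "real k \<le> z * real m" "z * real m \<le> real k + 1"
    by auto
qed

lemma sup_dist_le_cell_side:
  assumes "1 \<le> d" "0 < \<eta>" "x \<in> cube d" "y \<in> cube d"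
    and same_cell: "cell_of d (ncells \<eta>) x = cell_of d (ncells \<eta>) y"
  shows "sup_dist d x y \<le> 1 / real (ncells \<eta>)"
  unfolding sup_dist_def
proof (intro Max.boundedI)
  let ?m = "ncells \<eta>"
  have m: "1 \<le> ?m"
    using ncells_pos[OF assms(2)] .
  show "finite ((\<lambda>i. \<bar>x i - y i\<bar>) ` {..<d})" "(\<lambda>i. \<bar>x i - y i\<bar>) ` {..<d} \<noteq> {}"
    using assms(1) by (auto simp: lessThan_empty_iff)
  fix r
  assume "r \<in> (\<lambda>i. \<bar>x i - y i\<bar>) ` {..<d}"
  then obtain i where i: "i < d" and r: "r = \<bar>x i - y i\<bar>"
    by auto
  have same_index: "min (nat \<lfloor>x i * real ?m\<rfloor>) (?m - 1) = min (nat \<lfloor>y i * real ?m\<rfloor>) (?m - 1)"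
    using arg_cong[OF same_cell, of "\<lambda>l. l ! i"] i unfolding cell_of_def by simp
  have "0 \<le> x i" "x i \<le> 1" "0 \<le> y i" "y i \<le> 1"
    using assms(3,4) i unfolding cube_def by auto
  then have "\<bar>x i * real ?m - y i * real ?m\<bar> \<le> 1"
    using cell_index_bounds[OF m, of "x i"] cell_index_bounds[OF m, of "y i"] same_index
    by linarith
  then have "\<bar>x i - y i\<bar> * real ?m \<le> 1"
    by (simp add: abs_mult left_diff_distrib[symmetric])
  then show "r \<le> 1 / real ?m"
    using m r by (simp add: field_simps)
qed

text \<open>A cell state \<open>(a, b, c)\<close> encodes the range \<open>Y\<^sub>j = [a, b]\<close> and the counter
  \<open>c\<^sub>j\<close>; Algorithm 3 increments \<open>c\<^sub>j\<close> before comparing it with \<open>\<tau>\<close>, hence the test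
  \<open>\<tau> < c + 1\<close>.\<close>

fun cell_guess :: "real \<Rightarrow> real \<Rightarrow> real \<Rightarrow> cellst \<Rightarrow> real" where
  "cell_guess L \<eta> \<tau> (a, b, c) =
     (if b - a < 10 * L * \<eta> then (if \<tau> < real (c + 1) then b else a) else (a + b) / 2)"

fun cell_next :: "real \<Rightarrow> real \<Rightarrow> real \<Rightarrow> cellst \<Rightarrow> bool \<Rightarrow> cellst" where
  "cell_next L \<eta> \<tau> (a, b, c) \<sigma> =
     (if b - a < 10 * L * \<eta> then
        (if \<tau> < real (c + 1) then (if \<sigma> then (a, b, 0) else (0, L, 0))
         else (if \<sigma> then (0, L, 0) else (a, b, c + 1)))
      else if \<sigma> then (max a 0, min b ((a + b) / 2 + L * (1 / real (ncells \<eta>))), c)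
      else (max a ((a + b) / 2 - L * (1 / real (ncells \<eta>))), b, c))"

lemma alg3_guess_eq:
  "alg3_guess d L \<eta> \<tau> S x = cell_guess L \<eta> \<tau> (S (cell_of d (ncells \<eta>) x))"
  unfolding alg3_guess_def by (cases "S (cell_of d (ncells \<eta>) x)") simp

lemma alg3_update_eq:
  "alg3_update d L \<eta> \<tau> S x \<sigma> =
     S(cell_of d (ncells \<eta>) x := cell_next L \<eta> \<tau> (S (cell_of d (ncells \<eta>) x)) \<sigma>)"
  unfolding alg3_update_def Let_def by (cases "S (cell_of d (ncells \<eta>) x)") simp

definition feedback :: "bool \<Rightarrow> real \<Rightarrow> real \<Rightarrow> bool" where
  "feedback corrupted v q \<longleftrightarrow> (if corrupted then \<not> v < q else v < q)"

fun is_searching :: "real \<Rightarrow> real \<Rightarrow> cellst \<Rightarrow> bool" where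
  "is_searching L \<eta> (a, b, c) \<longleftrightarrow> \<not> b - a < 10 * L * \<eta>"

fun is_checking :: "real \<Rightarrow> real \<Rightarrow> real \<Rightarrow> cellst \<Rightarrow> bool" where
  "is_checking L \<eta> \<tau> (a, b, c) \<longleftrightarrow> b - a < 10 * L * \<eta> \<and> \<tau> < real (c + 1)"

fun is_pricing :: "real \<Rightarrow> real \<Rightarrow> real \<Rightarrow> cellst \<Rightarrow> bool" where
  "is_pricing L \<eta> \<tau> (a, b, c) \<longleftrightarrow> b - a < 10 * L * \<eta> \<and> \<not> \<tau> < real (c + 1)"

fun width :: "cellst \<Rightarrow> real" where
  "width (a, b, c) = b - a"

fun counter :: "cellst \<Rightarrow> nat" where
  "counter (a, b, c) = c"

fun cell_wf :: "real \<Rightarrow> real \<Rightarrow> cellst \<Rightarrow> bool" where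
  "cell_wf L \<tau> (a, b, c) \<longleftrightarrow> 0 \<le> a \<and> a \<le> b \<and> b \<le> L \<and> real c \<le> \<tau>"

locale alg3_setting =
  fixes d :: nat and L \<eta> \<tau> :: real and f :: "(nat \<Rightarrow> real) \<Rightarrow> real"
  assumes dim_pos: "1 \<le> d" and L_pos: "0 < L" and \<eta>_pos: "0 < \<eta>" and \<tau>_pos: "0 < \<tau>"
    and lipschitz: "lip_target d L f"
begin

abbreviation cell :: "(nat \<Rightarrow> real) \<Rightarrow> nat list" where
  "cell \<equiv> cell_of d (ncells \<eta>)"

definition margin :: real where
  "margin = L * (1 / real (ncells \<eta>))"

lemma margin_nonneg: "0 \<le> margin"
  using L_pos unfolding margin_def by simp

lemma margin_le: "margin \<le> L * \<eta>"
  unfolding margin_def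
  by (rule mult_left_mono[OF cell_side_le[OF \<eta>_pos]]) (use L_pos in simp)

lemma cell_next_eq [simp]:
  "cell_next L \<eta> \<tau> (a, b, c) \<sigma> =
     (if b - a < 10 * L * \<eta> then
        (if \<tau> < real (c + 1) then (if \<sigma> then (a, b, 0) else (0, L, 0))
         else (if \<sigma> then (0, L, 0) else (a, b, c + 1)))
      else if \<sigma> then (max a 0, min b ((a + b) / 2 + margin), c)
      else (max a ((a + b) / 2 - margin), b, c))"
  unfolding margin_def by simp

declare cell_next.simps [simp del]

lemma f_range: "x \<in> cube d \<Longrightarrow> 0 \<le> f x \<and> f x \<le> L"
  using lipschitz unfolding lip_target_def by auto

lemma f_same_cell:
  assumes "x \<in> cube d" "y \<in> cube d" "cell y = cell x"
  shows "\<bar>f x - f y\<bar> \<le> margin"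
proof -
  have "\<bar>f x - f y\<bar> \<le> L * sup_dist d x y"
    using lipschitz assms unfolding lip_target_def by auto
  also have "\<dots> \<le> margin"
    unfolding margin_def using sup_dist_le_cell_side[OF dim_pos \<eta>_pos assms(1,2)] assms(3) L_pos
    by (intro mult_left_mono) auto
  finally show ?thesis .
qed

lemma cell_wf_next: "cell_wf L \<tau> v \<Longrightarrow> cell_wf L \<tau> (cell_next L \<eta> \<tau> v \<sigma>)"
  using \<tau>_pos L_pos margin_nonneg
  by (cases v) (auto simp: min_def max_def field_simps)

lemma cell_guess_nonneg: "cell_wf L \<tau> v \<Longrightarrow> 0 \<le> cell_guess L \<eta> \<tau> v"
  by (cases v) auto

lemma pricing_loss_le_L:
  assumes "x \<in> cube d" "0 \<le> q"
  shows "pricing_loss (f x) q \<le> L"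
  using f_range[OF assms(1)] assms(2) unfolding pricing_loss_def by auto

lemma pricing_loss_round_le:
  assumes x: "x \<in> cube d" and wf: "cell_wf L \<tau> v"
    and \<sigma>: "\<sigma> = feedback cr (f x) (cell_guess L \<eta> \<tau> v)"
  shows "pricing_loss (f x) (cell_guess L \<eta> \<tau> v)
    \<le> 11 * L * \<eta> + L * (of_bool cr + of_bool (is_searching L \<eta> v) + of_bool (is_checking L \<eta> \<tau> v)
      + of_bool (is_pricing L \<eta> \<tau> v \<and> \<sigma> \<and> \<not> cr)
      + of_bool (is_pricing L \<eta> \<tau> v \<and> \<not> cr \<and> fst v + 11 * L * \<eta> < f x))"
    (is "_ \<le> _ + L * ?events")
proof (cases "cr \<or> is_searching L \<eta> v \<or> is_checking L \<eta> \<tau> v \<or> \<sigma>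
    \<or> fst v + 11 * L * \<eta> < f x")
  case True
  have "1 \<le> ?events"
    using True by (cases v) (auto split: if_splits)
  then have "L \<le> L * ?events"
    using L_pos by simp
  moreover have "pricing_loss (f x) (cell_guess L \<eta> \<tau> v) \<le> L"
    using pricing_loss_le_L[OF x cell_guess_nonneg[OF wf]] .
  moreover have "0 \<le> 11 * L * \<eta>"
    using L_pos \<eta>_pos by simp
  ultimately show ?thesis
    by linarith
next
  case False
  obtain a b c where v: "v = (a, b, c)"
    by (cases v)
  have guess: "cell_guess L \<eta> \<tau> v = a"
    using False v by auto
  have "a \<le> f x" "f x \<le> a + 11 * L * \<eta>"
    using False \<sigma> guess v by (auto simp: feedback_def)
  then have "pricing_loss (f x) (cell_guess L \<eta> \<tau> v) \<le> 11 * L * \<eta>"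
    unfolding pricing_loss_def guess by simp
  moreover have "0 \<le> L * ?events"
    using L_pos by simp
  ultimately show ?thesis
    by linarith
qed

lemma counter_step:
  "\<tau> * of_bool (is_checking L \<eta> \<tau> v) + real (counter (cell_next L \<eta> \<tau> v \<sigma>)) - real (counter v) \<le> 1"
  by (cases v) auto

text \<open>An upper bound on the number of searching rounds a cell still needs before its width
  drops below \<open>10 L \<eta>\<close>: a searching round shrinks the width \<open>w\<close> to at most
  \<open>w / 2 + margin \<le> 3 w / 5\<close>, and \<open>3 ln (5 / 3) \<ge> 1\<close>.\<close>

definition width_potential :: "real \<Rightarrow> real" where
  "width_potential w = (if w < 10 * L * \<eta> then 0 else 3 * ln (w / (10 * L * \<eta>)) + 1)"

lemma width_potential_nonneg: "0 \<le> width_potential w"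
  using L_pos \<eta>_pos unfolding width_potential_def by simp

lemma width_potential_mono:
  assumes "w \<le> w'"
  shows "width_potential w \<le> width_potential w'"
proof (cases "w < 10 * L * \<eta>")
  case True
  then show ?thesis
    using width_potential_nonneg[of w'] unfolding width_potential_def by simp
next
  case False
  moreover have "0 < 10 * L * \<eta>"
    using L_pos \<eta>_pos by simp
  ultimately have "0 < w"
    by linarith
  then have "ln (w / (10 * L * \<eta>)) \<le> ln (w' / (10 * L * \<eta>))"
    using assms L_pos \<eta>_pos by (simp add: divide_right_mono)
  then show ?thesis
    using False assms unfolding width_potential_def by simp
qed

lemma width_potential_L_le:
  assumes "\<eta> \<le> 1"
  shows "width_potential L \<le> 3 * ln (1 / \<eta>) + 1"
proof (cases "L < 10 * L * \<eta>")
  case True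
  then show ?thesis
    using assms \<eta>_pos unfolding width_potential_def by simp
next
  case False
  have "L / (10 * L * \<eta>) \<le> 1 / \<eta>"
    using L_pos \<eta>_pos by (simp add: field_simps)
  then have "ln (L / (10 * L * \<eta>)) \<le> ln (1 / \<eta>)"
    using L_pos \<eta>_pos by simp
  then show ?thesis
    using False unfolding width_potential_def by simp
qed

lemma width_potential_shrink:
  assumes w: "\<not> w < 10 * L * \<eta>" and w': "0 \<le> w'" "w' \<le> w / 2 + margin"
  shows "width_potential w' \<le> width_potential w - 1"
proof -
  have W: "0 < 10 * L * \<eta>"
    using L_pos \<eta>_pos by simp
  have ln_w: "0 \<le> ln (w / (10 * L * \<eta>))"
    using w W by simp
  show ?thesis
  proof (cases "w' < 10 * L * \<eta>")
    case True
    then show ?thesis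
      using w ln_w unfolding width_potential_def by simp
  next
    case False
    have pos: "0 < w" "0 < w'"
      using w False W by auto
    have "w' \<le> 3 / 5 * w"
      using w' margin_le w by simp
    then have "ln w' \<le> ln (3 / 5 * w)"
      using pos by simp
    also have "\<dots> = ln (3 / 5) + ln w"
      using pos by (subst ln_mult) simp_all
    moreover have "ln (3 / 5 :: real) \<le> 3 / 5 - 1"
      by (rule ln_le_minus_one) simp
    moreover have "ln (w / (10 * L * \<eta>)) = ln w - ln (10 * L * \<eta>)"
      "ln (w' / (10 * L * \<eta>)) = ln w' - ln (10 * L * \<eta>)"
      using pos W L_pos \<eta>_pos by (simp_all add: ln_div)
    ultimately show ?thesis
      using w False unfolding width_potential_def by simp
  qed
qed

lemma width_potential_step:
  assumes wf: "cell_wf L \<tau> v"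
  shows "of_bool (is_searching L \<eta> v) + width_potential (width (cell_next L \<eta> \<tau> v \<sigma>))
      - width_potential (width v)
    \<le> width_potential L * (of_bool (is_checking L \<eta> \<tau> v) + of_bool (is_pricing L \<eta> \<tau> v \<and> \<sigma>))"
proof -
  obtain a b c where v: "v = (a, b, c)"
    by (cases v)
  have ab: "0 \<le> a" "a \<le> b" "b \<le> L"
    using wf v by auto
  show ?thesis
  proof (cases "b - a < 10 * L * \<eta>")
    case False
    have "0 \<le> width (cell_next L \<eta> \<tau> v \<sigma>)" "width (cell_next L \<eta> \<tau> v \<sigma>) \<le> (b - a) / 2 + margin"
      using False ab margin_nonneg v by (auto simp: min_def max_def field_simps)
    then have "width_potential (width (cell_next L \<eta> \<tau> v \<sigma>)) \<le> width_potential (b - a) - 1"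
      by (rule width_potential_shrink[OF False])
    then show ?thesis
      using False v by simp
  next
    case True
    have "width (cell_next L \<eta> \<tau> v \<sigma>) \<le> L"
      using cell_wf_next[OF wf, of \<sigma>] by (cases "cell_next L \<eta> \<tau> v \<sigma>") simp
    then have next_le: "width_potential (width (cell_next L \<eta> \<tau> v \<sigma>)) \<le> width_potential L"
      by (rule width_potential_mono)
    consider "width (cell_next L \<eta> \<tau> v \<sigma>) = width v"
      | "is_checking L \<eta> \<tau> v \<or> is_pricing L \<eta> \<tau> v \<and> \<sigma>"
      using True v by (cases \<sigma>; cases "\<tau> < real (c + 1)") auto
    then show ?thesis
    proof cases
      case 1
      then show ?thesis
        using True v width_potential_nonneg[of L] by simp
    next
      case 2
      then have "width_potential L \<le> width_potential L * (of_bool (is_checking L \<eta> \<tau> v)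
          + of_bool (is_pricing L \<eta> \<tau> v \<and> \<sigma>))"
        using width_potential_nonneg[of L] v by auto
      then show ?thesis
        using True v next_le width_potential_nonneg[of "b - a"] by simp
    qed
  qed
qed

text \<open>\<open>MidpointQuery\<close> only discards values excluded by the Lipschitz bound, so only
  corrupted rounds create these violations.\<close>

definition lower_violated :: "nat list \<Rightarrow> cellst \<Rightarrow> bool" where
  "lower_violated j v \<longleftrightarrow> (\<exists>y\<in>cube d. cell y = j \<and> f y < fst v)"

definition upper_violated :: "nat list \<Rightarrow> cellst \<Rightarrow> bool" where
  "upper_violated j v \<longleftrightarrow> (\<exists>y\<in>cube d. cell y = j \<and> fst (snd v) + margin < f y)"

lemma not_lower_violated_reset: "\<not> lower_violated j (0, L, 0)"
  using f_range unfolding lower_violated_def by force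

lemma not_upper_violated_reset: "\<not> upper_violated j (0, L, 0)"
  using f_range margin_nonneg unfolding upper_violated_def by force

lemma lower_violated_next_imp:
  assumes x: "x \<in> cube d" and wf: "cell_wf L \<tau> v"
    and \<sigma>: "\<sigma> = feedback False (f x) (cell_guess L \<eta> \<tau> v)"
    and violated: "lower_violated (cell x) (cell_next L \<eta> \<tau> v \<sigma>)"
  shows "lower_violated (cell x) v"
proof -
  obtain a b c where v: "v = (a, b, c)"
    by (cases v)
  obtain y where y: "y \<in> cube d" "cell y = cell x" "f y < fst (cell_next L \<eta> \<tau> v \<sigma>)"
    using violated unfolding lower_violated_def by auto
  have "f y < a"
  proof (cases "is_searching L \<eta> v \<and> \<not> \<sigma>")
    case True
    then have "(a + b) / 2 \<le> f x"
      using \<sigma> v by (auto simp: feedback_def)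
    moreover have "\<bar>f x - f y\<bar> \<le> margin"
      using f_same_cell[OF x y(1,2)] .
    ultimately have "(a + b) / 2 - margin \<le> f y"
      by linarith
    then show ?thesis
      using True y(3) v by (auto simp: max_def split: if_splits)
  next
    case False
    then have "fst (cell_next L \<eta> \<tau> v \<sigma>) \<le> a"
      using wf v by auto
    then show ?thesis
      using y(3) by simp
  qed
  then show ?thesis
    using y(1,2) v unfolding lower_violated_def by auto
qed

lemma lower_violated_step:
  assumes x: "x \<in> cube d" and wf: "cell_wf L \<tau> v"
    and \<sigma>: "\<sigma> = feedback cr (f x) (cell_guess L \<eta> \<tau> v)"
  shows "of_bool (is_pricing L \<eta> \<tau> v \<and> \<sigma> \<and> \<not> cr)
      + of_bool (lower_violated (cell x) (cell_next L \<eta> \<tau> v \<sigma>)) - of_bool (lower_violated (cell x) v)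
    \<le> (of_bool cr :: real)"
proof -
  have surprise: "lower_violated (cell x) v \<and> \<not> lower_violated (cell x) (cell_next L \<eta> \<tau> v \<sigma>)"
    if "is_pricing L \<eta> \<tau> v \<and> \<sigma> \<and> \<not> cr"
  proof -
    obtain a b c where v: "v = (a, b, c)"
      by (cases v)
    have "f x < a"
      using that \<sigma> v by (auto simp: feedback_def)
    then have "lower_violated (cell x) v"
      using x v unfolding lower_violated_def by auto
    moreover have "cell_next L \<eta> \<tau> v \<sigma> = (0, L, 0)"
      using that v by simp
    ultimately show ?thesis
      using not_lower_violated_reset by simp
  qed
  show ?thesis
    using lower_violated_next_imp[OF x wf] surprise \<sigma> by (cases cr) auto
qed

text \<open>An uncorrupted pricing round at \<open>x\<close> with \<open>f x > a + 11 L \<eta>\<close> sees an upper-violated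
  cell and increments its counter, which never exceeds \<open>\<tau>\<close>; so each corrupted round pays for at
  most \<open>\<tau>\<close> such rounds.\<close>

definition upper_potential :: "nat list \<Rightarrow> cellst \<Rightarrow> real" where
  "upper_potential j v = of_bool (upper_violated j v) * (\<tau> - real (counter v))"

lemma upper_potential_nonneg: "cell_wf L \<tau> v \<Longrightarrow> 0 \<le> upper_potential j v"
  unfolding upper_potential_def by (cases v) auto

lemma upper_potential_le: "upper_potential j v \<le> \<tau>"
  using \<tau>_pos unfolding upper_potential_def by auto

lemma upper_violated_next_imp:
  assumes x: "x \<in> cube d" and wf: "cell_wf L \<tau> v"
    and \<sigma>: "\<sigma> = feedback False (f x) (cell_guess L \<eta> \<tau> v)"
    and not_undercharged: "\<not> (is_pricing L \<eta> \<tau> v \<and> \<not> \<sigma>)"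
    and violated: "upper_violated (cell x) (cell_next L \<eta> \<tau> v \<sigma>)"
  shows "upper_violated (cell x) v \<and> counter (cell_next L \<eta> \<tau> v \<sigma>) = counter v"
proof -
  obtain a b c where v: "v = (a, b, c)"
    by (cases v)
  obtain y where y: "y \<in> cube d" "cell y = cell x"
    and above: "fst (snd (cell_next L \<eta> \<tau> v \<sigma>)) + margin < f y"
    using violated unfolding upper_violated_def by blast
  have lip_y: "f y \<le> f x + margin"
    using f_same_cell[OF x y] by linarith
  have searching: "\<not> b - a < 10 * L * \<eta>"
  proof
    assume "b - a < 10 * L * \<eta>"
    then consider "cell_next L \<eta> \<tau> v \<sigma> = (0, L, 0)"
      | "\<sigma>" "f x < b" "fst (snd (cell_next L \<eta> \<tau> v \<sigma>)) = b"
      using \<sigma> not_undercharged v by (cases "\<tau> < real (c + 1)") (auto simp: feedback_def)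
    then show False
      using violated above lip_y not_upper_violated_reset by cases auto
  qed
  have "b + margin < f y"
  proof (cases \<sigma>)
    case True
    then have "f x < (a + b) / 2"
      using \<sigma> searching v by (simp add: feedback_def)
    then show ?thesis
      using above lip_y searching True v margin_nonneg by (simp add: min_def split: if_splits; linarith)
  next
    case False
    then show ?thesis
      using above searching v by simp
  qed
  then show ?thesis
    using y searching v unfolding upper_violated_def by auto
qed

lemma upper_potential_next_le:
  assumes x: "x \<in> cube d" and wf: "cell_wf L \<tau> v"
    and \<sigma>: "\<sigma> = feedback False (f x) (cell_guess L \<eta> \<tau> v)"
  shows "upper_potential (cell x) (cell_next L \<eta> \<tau> v \<sigma>)
      + of_bool (is_pricing L \<eta> \<tau> v \<and> \<not> \<sigma> \<and> upper_violated (cell x) v)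
    \<le> upper_potential (cell x) v"
proof (cases "is_pricing L \<eta> \<tau> v \<and> \<not> \<sigma>")
  case True
  then show ?thesis
    by (cases v) (simp add: upper_potential_def upper_violated_def)
next
  case False
  then show ?thesis
    using upper_violated_next_imp[OF x wf \<sigma> False] upper_potential_nonneg[OF wf, of "cell x"]
    by (auto simp: upper_potential_def)
qed

lemma upper_potential_step:
  assumes x: "x \<in> cube d" and wf: "cell_wf L \<tau> v"
    and \<sigma>: "\<sigma> = feedback cr (f x) (cell_guess L \<eta> \<tau> v)"
  shows "of_bool (is_pricing L \<eta> \<tau> v \<and> \<not> cr \<and> fst v + 11 * L * \<eta> < f x)
      + upper_potential (cell x) (cell_next L \<eta> \<tau> v \<sigma>) - upper_potential (cell x) v
    \<le> \<tau> * of_bool cr"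
proof (cases cr)
  case True
  then show ?thesis
    using upper_potential_le[of "cell x" "cell_next L \<eta> \<tau> v \<sigma>"]
      upper_potential_nonneg[OF wf, of "cell x"] by simp
next
  case False
  obtain a b c where v: "v = (a, b, c)"
    by (cases v)
  have undercharged: "\<not> \<sigma> \<and> upper_violated (cell x) v"
    if "is_pricing L \<eta> \<tau> v" "a + 11 * L * \<eta> < f x"
  proof
    have "0 \<le> 11 * L * \<eta>"
      using L_pos \<eta>_pos by simp
    then have "a < f x"
      using that v by simp
    then show "\<not> \<sigma>"
      using that \<sigma> False v by (simp add: feedback_def)
    have "b + margin < f x"
      using that margin_le v by simp
    then show "upper_violated (cell x) v"
      using x v unfolding upper_violated_def by auto
  qed
  have "of_bool (is_pricing L \<eta> \<tau> v \<and> \<not> cr \<and> fst v + 11 * L * \<eta> < f x)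
      \<le> (of_bool (is_pricing L \<eta> \<tau> v \<and> \<not> \<sigma> \<and> upper_violated (cell x) v) :: real)"
    using undercharged v by auto
  moreover have "\<sigma> = feedback False (f x) (cell_guess L \<eta> \<tau> v)"
    using \<sigma> False by simp
  note upper_potential_next_le[OF x wf this]
  moreover have "\<tau> * of_bool cr = 0"
    using False by simp
  ultimately show ?thesis
    by linarith
qed

end

locale alg3_execution = alg3_setting +
  fixes advx :: "hist \<Rightarrow> nat \<Rightarrow> real" and advc :: "hist \<Rightarrow> (nat \<Rightarrow> real) \<Rightarrow> real \<Rightarrow> bool"
  assumes advx_cube: "advx h \<in> cube d"
begin

declare sum_of_bool_eq [simp del] sum_mult_of_bool_eq [simp del] sum_of_bool_mult_eq [simp del]

text \<open>Rounds are numbered from \<open>0\<close>: round \<open>t\<close> is played in state \<open>state t\<close> after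
  history \<open>history t\<close>.\<close>

definition state :: "nat \<Rightarrow> lstate" where
  "state t = fst (alg3_run d L \<eta> \<tau> f advx advc t)"

definition history :: "nat \<Rightarrow> hist" where
  "history t = snd (alg3_run d L \<eta> \<tau> f advx advc t)"

definition ctx :: "nat \<Rightarrow> nat \<Rightarrow> real" where
  "ctx t = advx (history t)"

definition cell_state :: "nat \<Rightarrow> cellst" where
  "cell_state t = state t (cell (ctx t))"

definition guess :: "nat \<Rightarrow> real" where
  "guess t = cell_guess L \<eta> \<tau> (cell_state t)"

definition corrupted :: "nat \<Rightarrow> bool" where
  "corrupted t = advc (history t) (ctx t) (guess t)"

definition response :: "nat \<Rightarrow> bool" where
  "response t = feedback (corrupted t) (f (ctx t)) (guess t)"

definition grid :: "nat list set" where
  "grid = {j. set j \<subseteq> {..<ncells \<eta>} \<and> length j = d}"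

lemma alg3_run_Suc:
  "alg3_run d L \<eta> \<tau> f advx advc (Suc t) =
     ((state t)(cell (ctx t) := cell_next L \<eta> \<tau> (cell_state t) (response t)),
      history t @ [(ctx t, guess t, response t, corrupted t)])"
  by (simp add: state_def history_def ctx_def cell_state_def guess_def corrupted_def response_def
      feedback_def alg3_update_eq alg3_guess_eq Let_def split: prod.split)

lemma state_0: "state 0 = (\<lambda>_. (0, L, 0))"
  unfolding state_def by simp

lemma state_Suc: "state (Suc t) = (state t)(cell (ctx t) := cell_next L \<eta> \<tau> (cell_state t) (response t))"
  unfolding state_def[of "Suc t"] alg3_run_Suc by simp

lemma history_0: "history 0 = []"
  unfolding history_def by simp

lemma history_Suc: "history (Suc t) = history t @ [(ctx t, guess t, response t, corrupted t)]"
  unfolding history_def[of "Suc t"] alg3_run_Suc by simp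

lemma response_eq: "response t = feedback (corrupted t) (f (ctx t)) (cell_guess L \<eta> \<tau> (cell_state t))"
  unfolding response_def guess_def ..

lemma ctx_cube: "ctx t \<in> cube d"
  unfolding ctx_def by (rule advx_cube)

lemma cell_wf_state: "cell_wf L \<tau> (state t j)"
proof (induction t arbitrary: j)
  case 0
  then show ?case
    using L_pos \<tau>_pos by (simp add: state_0)
next
  case (Suc t)
  then show ?case
    using cell_wf_next by (simp add: state_Suc cell_state_def)
qed

lemma cell_wf_cell_state: "cell_wf L \<tau> (cell_state t)"
  unfolding cell_state_def by (rule cell_wf_state)

lemma total_loss_history: "total_loss f (history T) = (\<Sum>t<T. pricing_loss (f (ctx t)) (guess t))"
  by (induction T) (simp_all add: history_0 history_Suc total_loss_def)

lemma num_corrupted_history: "real (num_corrupted (history T)) = (\<Sum>t<T. of_bool (corrupted t))"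
  by (induction T) (simp_all add: history_0 history_Suc num_corrupted_def)

lemma finite_grid: "finite grid"
  unfolding grid_def by (rule finite_lists_length_eq) simp

lemma card_grid: "card grid = ncells \<eta> ^ d"
  unfolding grid_def by (subst card_lists_length_eq) simp_all

lemma cell_in_grid: "cell x \<in> grid"
  using ncells_pos[OF \<eta>_pos] unfolding grid_def cell_of_def by auto

text \<open>Only the cell of the current context changes, so the total cell potential
  telescopes.\<close>

lemma sum_le_by_cell_potential:
  fixes g :: "nat list \<Rightarrow> cellst \<Rightarrow> real" and e r :: "nat \<Rightarrow> real"
  assumes step: "\<And>t. e t + g (cell (ctx t)) (cell_next L \<eta> \<tau> (cell_state t) (response t))
      - g (cell (ctx t)) (cell_state t) \<le> r t"
    and nonneg: "\<And>j v. cell_wf L \<tau> v \<Longrightarrow> 0 \<le> g j v"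
  shows "(\<Sum>t<T. e t) \<le> (\<Sum>j\<in>grid. g j (0, L, 0)) + (\<Sum>t<T. r t)"
proof -
  define \<Phi> where "\<Phi> t = (\<Sum>j\<in>grid. g j (state t j))" for t
  have split: "\<Phi> t = g (cell (ctx t)) (state t (cell (ctx t)))
      + (\<Sum>j\<in>grid - {cell (ctx t)}. g j (state t j))" for t
    unfolding \<Phi>_def by (rule sum.remove[OF finite_grid cell_in_grid])
  have \<Phi>_step: "\<Phi> (Suc t) - \<Phi> t = g (cell (ctx t)) (cell_next L \<eta> \<tau> (cell_state t) (response t))
      - g (cell (ctx t)) (cell_state t)" for t
  proof -
    let ?k = "cell (ctx t)" and ?w = "cell_next L \<eta> \<tau> (cell_state t) (response t)"
    have "\<Phi> (Suc t) = g ?k ?w + (\<Sum>j\<in>grid - {?k}. g j (((state t)(?k := ?w)) j))"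
      unfolding \<Phi>_def state_Suc by (subst sum.remove[OF finite_grid cell_in_grid[of "ctx t"]]) simp
    also have "(\<Sum>j\<in>grid - {?k}. g j (((state t)(?k := ?w)) j)) = (\<Sum>j\<in>grid - {?k}. g j (state t j))"
      by (rule sum.cong) auto
    finally show ?thesis
      using split[of t] by (simp add: cell_state_def)
  qed
  have "(\<Sum>t<T. e t) \<le> (\<Sum>t<T. r t - (\<Phi> (Suc t) - \<Phi> t))"
  proof (rule sum_mono)
    fix t
    show "e t \<le> r t - (\<Phi> (Suc t) - \<Phi> t)"
      using step[of t] \<Phi>_step[of t] by linarith
  qed
  also have "\<dots> = (\<Sum>t<T. r t) - (\<Phi> T - \<Phi> 0)"
    using sum_lessThan_telescope[of \<Phi> T] by (simp add: sum_subtractf)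
  also have "\<dots> \<le> \<Phi> 0 + (\<Sum>t<T. r t)"
  proof -
    have "0 \<le> \<Phi> T"
      unfolding \<Phi>_def using nonneg[OF cell_wf_state] by (rule sum_nonneg)
    then show ?thesis
      by simp
  qed
  finally show ?thesis
    unfolding \<Phi>_def state_0 .
qed

lemma checking_rounds_le: "\<tau> * (\<Sum>t<T. of_bool (is_checking L \<eta> \<tau> (cell_state t))) \<le> real T"
proof -
  have "(\<Sum>t<T. \<tau> * of_bool (is_checking L \<eta> \<tau> (cell_state t)))
      \<le> (\<Sum>j\<in>grid. real (counter (0, L, 0))) + (\<Sum>t<T. 1)"
    by (rule sum_le_by_cell_potential[where g = "\<lambda>j v. real (counter v)"]) (rule counter_step, simp)
  then show ?thesis
    by (simp add: sum_distrib_left)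
qed

lemma searching_rounds_le:
  "(\<Sum>t<T. of_bool (is_searching L \<eta> (cell_state t)))
    \<le> width_potential L * (real (ncells \<eta> ^ d) + (\<Sum>t<T. of_bool (is_checking L \<eta> \<tau> (cell_state t)))
        + (\<Sum>t<T. of_bool (is_pricing L \<eta> \<tau> (cell_state t) \<and> response t)))"
proof -
  have "(\<Sum>t<T. of_bool (is_searching L \<eta> (cell_state t)))
      \<le> (\<Sum>j\<in>grid. width_potential (width (0, L, 0)))
        + (\<Sum>t<T. width_potential L * (of_bool (is_checking L \<eta> \<tau> (cell_state t))
            + of_bool (is_pricing L \<eta> \<tau> (cell_state t) \<and> response t)))"
    by (rule sum_le_by_cell_potential[where g = "\<lambda>j v. width_potential (width v)"])
      (rule width_potential_step[OF cell_wf_cell_state], rule width_potential_nonneg)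
  then show ?thesis
    by (simp add: card_grid sum_distrib_left sum.distrib distrib_left mult.commute)
qed

lemma uncorrupted_surprises_le:
  "(\<Sum>t<T. of_bool (is_pricing L \<eta> \<tau> (cell_state t) \<and> response t \<and> \<not> corrupted t))
    \<le> (\<Sum>t<T. of_bool (corrupted t) :: real)"
proof -
  have "(\<Sum>t<T. of_bool (is_pricing L \<eta> \<tau> (cell_state t) \<and> response t \<and> \<not> corrupted t))
      \<le> (\<Sum>j\<in>grid. of_bool (lower_violated j (0, L, 0))) + (\<Sum>t<T. of_bool (corrupted t) :: real)"
    by (rule sum_le_by_cell_potential[where g = "\<lambda>j v. of_bool (lower_violated j v)"])
      (rule lower_violated_step[OF ctx_cube cell_wf_cell_state response_eq], simp)
  then show ?thesis
    by (simp add: not_lower_violated_reset)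
qed

lemma undercharged_rounds_le:
  "(\<Sum>t<T. of_bool (is_pricing L \<eta> \<tau> (cell_state t) \<and> \<not> corrupted t
      \<and> fst (cell_state t) + 11 * L * \<eta> < f (ctx t)))
    \<le> \<tau> * (\<Sum>t<T. of_bool (corrupted t))"
proof -
  have "(\<Sum>t<T. of_bool (is_pricing L \<eta> \<tau> (cell_state t) \<and> \<not> corrupted t
        \<and> fst (cell_state t) + 11 * L * \<eta> < f (ctx t)))
      \<le> (\<Sum>j\<in>grid. upper_potential j (0, L, 0)) + (\<Sum>t<T. \<tau> * of_bool (corrupted t))"
    by (rule sum_le_by_cell_potential[where g = upper_potential])
      (rule upper_potential_step[OF ctx_cube cell_wf_cell_state response_eq],
        rule upper_potential_nonneg)
  then show ?thesis
    by (simp add: upper_potential_def not_upper_violated_reset sum_distrib_left)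
qed

lemma total_loss_le_round_events:
  "total_loss f (history T) \<le> 11 * L * \<eta> * real T + L * ((\<Sum>t<T. of_bool (corrupted t))
    + (\<Sum>t<T. of_bool (is_searching L \<eta> (cell_state t)))
    + (\<Sum>t<T. of_bool (is_checking L \<eta> \<tau> (cell_state t)))
    + (\<Sum>t<T. of_bool (is_pricing L \<eta> \<tau> (cell_state t) \<and> response t \<and> \<not> corrupted t))
    + (\<Sum>t<T. of_bool (is_pricing L \<eta> \<tau> (cell_state t) \<and> \<not> corrupted t
        \<and> fst (cell_state t) + 11 * L * \<eta> < f (ctx t))))"
proof -
  have "total_loss f (history T) \<le> (\<Sum>t<T. 11 * L * \<eta> + L * (of_bool (corrupted t)
      + of_bool (is_searching L \<eta> (cell_state t)) + of_bool (is_checking L \<eta> \<tau> (cell_state t))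
      + of_bool (is_pricing L \<eta> \<tau> (cell_state t) \<and> response t \<and> \<not> corrupted t)
      + of_bool (is_pricing L \<eta> \<tau> (cell_state t) \<and> \<not> corrupted t
          \<and> fst (cell_state t) + 11 * L * \<eta> < f (ctx t))))"
    unfolding total_loss_history guess_def
    by (intro sum_mono pricing_loss_round_le[OF ctx_cube cell_wf_cell_state response_eq])
  then show ?thesis
    by (simp add: sum.distrib sum_distrib_left distrib_left mult_ac)
qed

theorem total_loss_le:
  fixes T :: nat
  defines "h \<equiv> run_hist d L \<eta> \<tau> f advx advc T"
  shows "total_loss f h \<le> 11 * L * \<eta> * real T
    + L * ((width_potential L + 1) * (real T / \<tau>) + width_potential L * real (ncells \<eta> ^ d)
      + (2 * width_potential L + 2 + \<tau>) * real (num_corrupted h))"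
proof -
  define P where "P = width_potential L"
  define NC where "NC = (\<Sum>t<T. of_bool (corrupted t) :: real)"
  define Ns where "Ns = (\<Sum>t<T. of_bool (is_searching L \<eta> (cell_state t)) :: real)"
  define Nc where "Nc = (\<Sum>t<T. of_bool (is_checking L \<eta> \<tau> (cell_state t)) :: real)"
  define Np where "Np = (\<Sum>t<T. of_bool (is_pricing L \<eta> \<tau> (cell_state t) \<and> response t) :: real)"
  define Nu where "Nu = (\<Sum>t<T. of_bool (is_pricing L \<eta> \<tau> (cell_state t) \<and> response t
    \<and> \<not> corrupted t) :: real)"
  define Ne where "Ne = (\<Sum>t<T. of_bool (is_pricing L \<eta> \<tau> (cell_state t) \<and> \<not> corrupted t
    \<and> fst (cell_state t) + 11 * L * \<eta> < f (ctx t)) :: real)"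
  have h: "h = history T"
    unfolding h_def run_hist_def history_def ..
  have "\<tau> * Nc \<le> real T"
    unfolding Nc_def by (rule checking_rounds_le)
  then have Nc: "Nc \<le> real T / \<tau>"
    using \<tau>_pos by (simp add: pos_le_divide_eq mult.commute)
  have Nu: "Nu \<le> NC"
    unfolding Nu_def NC_def by (rule uncorrupted_surprises_le)
  have Ne: "Ne \<le> \<tau> * NC"
    unfolding Ne_def NC_def by (rule undercharged_rounds_le)
  have "Np \<le> Nu + NC"
    unfolding Np_def Nu_def NC_def sum.distrib[symmetric] by (intro sum_mono) auto
  then have "P * (real (ncells \<eta> ^ d) + Nc + Np) \<le> P * (real (ncells \<eta> ^ d) + real T / \<tau> + 2 * NC)"
    using Nc Nu width_potential_nonneg unfolding P_def by (intro mult_left_mono) auto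
  then have Ns: "Ns \<le> P * (real (ncells \<eta> ^ d) + real T / \<tau> + 2 * NC)"
    using searching_rounds_le[of T] unfolding Ns_def P_def Nc_def Np_def by simp
  have "NC + Ns + Nc + Nu + Ne
      \<le> NC + P * (real (ncells \<eta> ^ d) + real T / \<tau> + 2 * NC) + real T / \<tau> + NC + \<tau> * NC"
    using Nc Nu Ne Ns by linarith
  also have "\<dots> = (P + 1) * (real T / \<tau>) + P * real (ncells \<eta> ^ d) + (2 * P + 2 + \<tau>) * NC"
    by (simp add: algebra_simps add_divide_distrib)
  finally have events: "L * (NC + Ns + Nc + Nu + Ne)
      \<le> L * ((P + 1) * (real T / \<tau>) + P * real (ncells \<eta> ^ d) + (2 * P + 2 + \<tau>) * NC)"
    using L_pos by (intro mult_left_mono) auto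
  have loss: "total_loss f h \<le> 11 * L * \<eta> * real T + L * (NC + Ns + Nc + Nu + Ne)"
    unfolding h NC_def Ns_def Nc_def Nu_def Ne_def by (rule total_loss_le_round_events)
  have NC_eq: "real (num_corrupted h) = NC"
    unfolding h NC_def by (rule num_corrupted_history)
  show ?thesis
    unfolding NC_eq P_def[symmetric] using loss events by linarith
qed

end

lemma length_run_hist: "length (run_hist d L \<eta> \<tau> f advx advc T) = T"
  unfolding run_hist_def by (induction T) (auto simp: Let_def split: prod.split)

lemma num_corrupted_le_length: "num_corrupted h \<le> length h"
  unfolding num_corrupted_def by (rule length_filter_le)

lemma tuned_eta:
  fixes T :: real and d :: nat
  assumes T: "1 \<le> T"
  defines "\<eta> \<equiv> T powr (- 1 / (real d + 1))"
  shows "\<eta> \<le> 1" and "\<eta> * T = T powr (real d / (real d + 1))"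
    and "ln (1 / \<eta>) \<le> ln T" and "real (ncells \<eta> ^ d) \<le> 2 ^ d * T powr (real d / (real d + 1))"
proof -
  have inverse: "1 / \<eta> = T powr (1 / (real d + 1))"
    unfolding \<eta>_def by (simp add: powr_minus_divide)
  have "1 \<le> 1 / \<eta>"
    unfolding inverse using T by (simp add: ge_one_powr_ge_zero)
  have pos: "0 < \<eta>"
    unfolding \<eta>_def using T by simp
  then show "\<eta> \<le> 1"
    using \<open>1 \<le> 1 / \<eta>\<close> by (simp add: field_simps)
  have "\<eta> * T = T powr (- 1 / (real d + 1)) * T powr 1"
    unfolding \<eta>_def using T by simp
  also have "\<dots> = T powr (- 1 / (real d + 1) + 1)"
    by (rule powr_add[symmetric])
  also have "- 1 / (real d + 1) + 1 = real d / (real d + 1)"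
    by (simp add: field_simps)
  finally show "\<eta> * T = T powr (real d / (real d + 1))" .
  have "ln (1 / \<eta>) = ln T / (real d + 1)"
    unfolding inverse using T by (simp add: ln_powr)
  also have "\<dots> \<le> ln T"
    using T by (simp add: divide_le_eq mult_le_cancel_left1)
  finally show "ln (1 / \<eta>) \<le> ln T" .
  have "real (ncells \<eta>) ^ d \<le> (2 * (1 / \<eta>)) ^ d"
    using ncells_le_twice_inverse[OF pos \<open>\<eta> \<le> 1\<close>] by (intro power_mono) auto
  also have "\<dots> = 2 ^ d * T powr (real d / (real d + 1))"
    unfolding power_mult_distrib inverse using T by (simp add: powr_power field_simps)
  finally show "real (ncells \<eta> ^ d) \<le> 2 ^ d * T powr (real d / (real d + 1))"
    by simp
qed

lemma tuned_tau:
  fixes T C :: real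
  assumes "0 < T" "0 < C"
  shows "T / sqrt (T / C) = sqrt (T * C)" and "sqrt (T / C) * C = sqrt (T * C)"
proof -
  have "sqrt (T / C) * sqrt (T * C) = sqrt (T ^ 2)"
    using assms by (simp flip: real_sqrt_mult add: power2_eq_square)
  then show "T / sqrt (T / C) = sqrt (T * C)"
    using assms by (simp add: field_simps)
  have "sqrt (T / C) * C = sqrt (T / C) * sqrt (C ^ 2)"
    using assms by simp
  also have "\<dots> = sqrt (T / C * C ^ 2)"
    by (rule real_sqrt_mult[symmetric])
  also have "T / C * C ^ 2 = T * C"
    using assms by (simp add: power2_eq_square)
  finally show "sqrt (T / C) * C = sqrt (T * C)" .
qed

lemma le_sqrt_mult:
  fixes x a b :: real
  assumes "0 \<le> x" "x \<le> a" "x \<le> b"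
  shows "x \<le> sqrt (a * b)"
proof (rule real_le_rsqrt)
  show "x\<^sup>2 \<le> a * b"
    using mult_mono[OF assms(2,3)] assms by (simp add: power2_eq_square)
qed

lemma half_le_ln:
  fixes x :: real
  assumes "2 \<le> x"
  shows "1 / 2 \<le> ln x"
proof -
  have "ln (1 / 2 :: real) \<le> 1 / 2 - 1"
    by (rule ln_le_minus_one) simp
  then have "1 / 2 \<le> ln (2 :: real)"
    by (simp add: ln_div)
  also have "\<dots> \<le> ln x"
    using assms by simp
  finally show ?thesis .
qed

lemma tuned_bound_arith:
  fixes x L P M N \<eta> T \<tau> D R l :: real
  assumes x: "x \<le> 11 * L * \<eta> * T + L * ((P + 1) * (T / \<tau>) + P * M + (2 * P + 2 + \<tau>) * N)"
    and L: "0 < L" and P: "0 \<le> P" "P \<le> 5 * l" and l: "1 \<le> 2 * l"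
    and D: "\<eta> * T = D" "0 \<le> D" and R: "T / \<tau> = R" "0 \<le> R"
    and M: "M \<le> 2 ^ d * D" and N: "N \<le> R" "\<tau> * N \<le> R"
  shows "x \<le> (23 + 5 * 2 ^ d) * L * l * (D + R)"
proof -
  have "P * M \<le> P * (2 ^ d * D)"
    using P M by (intro mult_left_mono)
  also have "\<dots> \<le> 5 * l * (2 ^ d * D)"
    using P D by (intro mult_right_mono) auto
  finally have PM: "P * M \<le> 5 * l * 2 ^ d * D"
    by simp
  have "(2 * P + 2) * N \<le> (2 * P + 2) * R"
    using P N by (intro mult_left_mono) auto
  then have "(P + 1) * R + P * M + (2 * P + 2 + \<tau>) * N \<le> (3 * P + 4) * R + 5 * l * 2 ^ d * D"
    using PM N by (simp add: algebra_simps)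
  also have "\<dots> \<le> 23 * l * R + 5 * l * 2 ^ d * D"
    using P l R by (intro add_right_mono mult_right_mono) auto
  finally have "11 * D + ((P + 1) * R + P * M + (2 * P + 2 + \<tau>) * N)
      \<le> 22 * l * D + 23 * l * R + 5 * l * 2 ^ d * D"
    using mult_right_mono[OF l D(2)] by linarith
  also have "\<dots> \<le> (23 + 5 * 2 ^ d) * l * (D + R)"
    using l D R by (simp add: algebra_simps)
  finally have "L * (11 * D + ((P + 1) * R + P * M + (2 * P + 2 + \<tau>) * N))
      \<le> L * ((23 + 5 * 2 ^ d) * l * (D + R))"
    using L by (intro mult_left_mono) auto
  moreover have "x \<le> L * (11 * D + ((P + 1) * R + P * M + (2 * P + 2 + \<tau>) * N))"
    using x unfolding D(1)[symmetric] R(1)[symmetric] by (simp add: algebra_simps)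
  ultimately show ?thesis
    by (simp add: algebra_simps)
qed

context alg3_execution
begin

theorem total_loss_tuned:
  fixes T C :: nat
  assumes T: "2 \<le> T" and C: "1 \<le> C"
    and \<eta>_eq: "\<eta> = real T powr (- 1 / (real d + 1))" and \<tau>_eq: "\<tau> = sqrt (real T / real C)"
    and corrupted: "num_corrupted (run_hist d L \<eta> \<tau> f advx advc T) \<le> C"
  shows "total_loss f (run_hist d L \<eta> \<tau> f advx advc T) \<le> (23 + 5 * 2 ^ d) * L * ln (real T)
      * (real T powr (real d / (real d + 1)) + sqrt (real T * real C))"
proof -
  let ?h = "run_hist d L \<eta> \<tau> f advx advc T"
  have \<eta>: "\<eta> \<le> 1" "\<eta> * real T = real T powr (real d / (real d + 1))"
    "ln (1 / \<eta>) \<le> ln (real T)" "real (ncells \<eta> ^ d) \<le> 2 ^ d * real T powr (real d / (real d + 1))"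
    unfolding \<eta>_eq using tuned_eta[of "real T" d] T by auto
  have \<tau>: "real T / \<tau> = sqrt (real T * real C)" "\<tau> * real C = sqrt (real T * real C)"
    unfolding \<tau>_eq using tuned_tau[of "real T" "real C"] T C by auto
  have ln_T: "1 \<le> 2 * ln (real T)"
    using half_le_ln[of "real T"] T by simp
  have P: "width_potential L \<le> 5 * ln (real T)"
    using width_potential_L_le[OF \<eta>(1)] \<eta>(3) ln_T by linarith
  have "real (num_corrupted ?h) \<le> sqrt (real T * real C)"
    using le_sqrt_mult num_corrupted_le_length[of ?h] corrupted unfolding length_run_hist by simp
  moreover have "\<tau> * real (num_corrupted ?h) \<le> \<tau> * real C"
    using corrupted \<tau>_pos by (intro mult_left_mono) auto
  ultimately show ?thesis
    unfolding \<tau>(2)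
    by (intro tuned_bound_arith[OF total_loss_le[of T] L_pos width_potential_nonneg P ln_T \<eta>(2) _ \<tau>(1)
        _ \<eta>(4)]) simp_all
qed

end

theorem corollary15:
  fixes d :: nat
  assumes "d \<ge> 1"
  shows "\<exists>K :: real. \<exists>k :: nat. \<forall>(L :: real) (T :: nat) (C :: nat) f advx advc.
    L > 0 \<longrightarrow> T \<ge> 2 \<longrightarrow> C \<ge> 1 \<longrightarrow> lip_target d L f \<longrightarrow> (\<forall>h. advx h \<in> cube d) \<longrightarrow>
    (let \<eta>0 = real T powr (- 1 / (real d + 1)); \<tau>0 = sqrt (real T / real C);
         h = run_hist d L \<eta>0 \<tau>0 f advx advc T
     in num_corrupted h \<le> C \<longrightarrow>
        total_loss f h \<le> K * L * (ln (real T)) ^ k *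
          (real T powr (real d / (real d + 1)) + sqrt (real T * real C)))"
proof (rule exI[of _ "23 + 5 * 2 ^ d"], rule exI[of _ 1], intro allI impI)
  fix L :: real and T C :: nat and f :: "(nat \<Rightarrow> real) \<Rightarrow> real"
    and advx :: "hist \<Rightarrow> nat \<Rightarrow> real" and advc :: "hist \<Rightarrow> (nat \<Rightarrow> real) \<Rightarrow> real \<Rightarrow> bool"
  assume L: "L > 0" and T: "T \<ge> 2" and C: "C \<ge> 1" and lip: "lip_target d L f"
    and adv: "\<forall>h. advx h \<in> cube d"
  define \<eta> where "\<eta> = real T powr (- 1 / (real d + 1))"
  define \<tau> where "\<tau> = sqrt (real T / real C)"
  interpret alg3_execution d L \<eta> \<tau> f advx advc
    using assms L T C lip adv unfolding \<eta>_def \<tau>_def by unfold_locales auto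
  show "let \<eta>0 = real T powr (- 1 / (real d + 1)); \<tau>0 = sqrt (real T / real C);
      h = run_hist d L \<eta>0 \<tau>0 f advx advc T in num_corrupted h \<le> C \<longrightarrow>
        total_loss f h \<le> (23 + 5 * 2 ^ d) * L * ln (real T) ^ 1
          * (real T powr (real d / (real d + 1)) + sqrt (real T * real C))"
    unfolding Let_def \<eta>_def[symmetric] \<tau>_def[symmetric]
    using total_loss_tuned[OF T C \<eta>_def \<tau>_def] by simp
qed

end
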